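(* Let $N\ge1$ be an integer, $0<\lambda<1$ and $\lambda^N\le\delta\le1$, and put $k_+=\lceil\log_\lambda\delta\rceil$, $k_-=\lfloor\log_\lambda\delta\rfloor$. Then $$\frac{(N-k_+)\lambda}{k_++(N-k_+)\lambda}\le F(N,\delta,\lambda)\le\frac{(N-k_-)\lambda}{k_-+(N-k_-)\lambda}.$$
   Context: Let $\mathcal H$ be a Hilbert space of finite dimension $D\ge 2$ and $|\Psi\rangle\in\mathcal H$ a unit vector. For $0\le\lambda<1$ let $\Omega_\lambda=|\Psi\rangle\langle\Psi|+\lambda(1-|\Psi\rangle\langle\Psi|)$. For a density operator $\rho$ on $\mathcal H^{\otimes(N+1)}$ put $p_\rho=\mathrm{tr}[(\Omega_\lambda^{\otimes N}\otimes 1)\rho]$ and $f_\rho=\mathrm{tr}[(\Omega_\lambda^{\otimes N}\otimes|\Psi\rangle\langle\Psi|)\rho]$, and $F(N,\delta,\lambda)=\min\{f_\rho/p_\rho:p_\rho\ge\delta\}$, the minimum over permutation-invariant density operators on $\mathcal H^{\otimes(N+1)}$. *)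

theory Defs
  imports "HOL-Analysis.Analysis" "HOL-Combinatorics.Permutations"
begin

text \<open>The Hilbert space H has an orthonormal basis indexed by the finite type 'd,
  so D = CARD('d). A basis vector of the n-fold tensor power is indexed by a tuple
  in {..<n} ->E UNIV. Operators on the n-fold tensor power are given by their
  matrix entries in this product basis.\<close>

type_synonym 'd idx = "nat \<Rightarrow> 'd"
type_synonym 'd op = "'d idx \<Rightarrow> 'd idx \<Rightarrow> complex"

definition tuples :: "nat \<Rightarrow> ('d::finite) idx set" where
  "tuples n = ({..<n} \<rightarrow>\<^sub>E (UNIV :: 'd set))"

definition qform :: "nat \<Rightarrow> ('d::finite) op \<Rightarrow> ('d idx \<Rightarrow> complex) \<Rightarrow> complex" where
  "qform n A v = (\<Sum>i\<in>tuples n. \<Sum>j\<in>tuples n. cnj (v i) * A i j * v j)"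

definition trace_op :: "nat \<Rightarrow> ('d::finite) op \<Rightarrow> complex" where
  "trace_op n A = (\<Sum>i\<in>tuples n. A i i)"

text \<open>Positive semidefinite (hence Hermitian) operator of unit trace.\<close>
definition density_op :: "nat \<Rightarrow> ('d::finite) op \<Rightarrow> bool" where
  "density_op n \<rho> \<longleftrightarrow>
     (\<forall>v. qform n \<rho> v \<in> \<real> \<and> 0 \<le> Re (qform n \<rho> v)) \<and> trace_op n \<rho> = 1"

text \<open>Invariance under all permutations of the tensor factors:
  P_sigma rho P_sigma^dagger = rho.\<close>
definition perm_invariant :: "nat \<Rightarrow> ('d::finite) op \<Rightarrow> bool" where
  "perm_invariant n \<rho> \<longleftrightarrow>
     (\<forall>\<sigma>. \<sigma> permutes {..<n} \<longrightarrow>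
        (\<forall>i\<in>tuples n. \<forall>j\<in>tuples n. \<rho> (i \<circ> \<sigma>) (j \<circ> \<sigma>) = \<rho> i j))"

definition unit_vec :: "('d::finite \<Rightarrow> complex) \<Rightarrow> bool" where
  "unit_vec \<psi> \<longleftrightarrow> (\<Sum>a\<in>UNIV. (cmod (\<psi> a))\<^sup>2) = 1"

definition proj :: "('d::finite \<Rightarrow> complex) \<Rightarrow> 'd \<Rightarrow> 'd \<Rightarrow> complex" where
  "proj \<psi> a b = \<psi> a * cnj (\<psi> b)"

definition Omega :: "('d::finite \<Rightarrow> complex) \<Rightarrow> real \<Rightarrow> 'd \<Rightarrow> 'd \<Rightarrow> complex" where
  "Omega \<psi> lam a b = proj \<psi> a b + complex_of_real lam * ((if a = b then 1 else 0) - proj \<psi> a b)"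

text \<open>Omega^{tensor N} tensor X on H^{tensor (N+1)} (X acts on factor number N).\<close>
definition omega_tensor :: "nat \<Rightarrow> ('d::finite \<Rightarrow> complex) \<Rightarrow> real \<Rightarrow> ('d \<Rightarrow> 'd \<Rightarrow> complex) \<Rightarrow> 'd op" where
  "omega_tensor N \<psi> lam X i j = (\<Prod>k<N. Omega \<psi> lam (i k) (j k)) * X (i N) (j N)"

definition tr_prod :: "nat \<Rightarrow> ('d::finite) op \<Rightarrow> 'd op \<Rightarrow> complex" where
  "tr_prod n A \<rho> = (\<Sum>i\<in>tuples n. \<Sum>j\<in>tuples n. A i j * \<rho> j i)"

definition p_val :: "nat \<Rightarrow> ('d::finite \<Rightarrow> complex) \<Rightarrow> real \<Rightarrow> 'd op \<Rightarrow> real" where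
  "p_val N \<psi> lam \<rho> = Re (tr_prod (Suc N) (omega_tensor N \<psi> lam (\<lambda>a b. if a = b then 1 else 0)) \<rho>)"

definition f_val :: "nat \<Rightarrow> ('d::finite \<Rightarrow> complex) \<Rightarrow> real \<Rightarrow> 'd op \<Rightarrow> real" where
  "f_val N \<psi> lam \<rho> = Re (tr_prod (Suc N) (omega_tensor N \<psi> lam (proj \<psi>)) \<rho>)"

text \<open>F(N, delta, lambda): the minimum (rendered as infimum) of f/p over
  permutation-invariant density operators on H^{tensor (N+1)} with p >= delta.\<close>
definition F_fid :: "nat \<Rightarrow> real \<Rightarrow> real \<Rightarrow> ('d::finite \<Rightarrow> complex) \<Rightarrow> real" where
  "F_fid N \<delta> lam \<psi> = Inf {f_val N \<psi> lam \<rho> / p_val N \<psi> lam \<rho> | \<rho>.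
       density_op (Suc N) \<rho> \<and> perm_invariant (Suc N) \<rho> \<and> p_val N \<psi> lam \<rho> \<ge> \<delta>}"

end

(* Write Omega = P + lam Q, where P projects onto Psi and Q = 1 - P, and expand
   Omega^(tensor N) tensor X as a sum over the sets S of tensor factors that carry Q.
   For a permutation-invariant rho the weights of these patterns in rho only enter
   through their sums A_m over the layers |S| = m, so p = sum_m A_m p_m and
   f = sum_m A_m f_m are linear in a probability vector A.  The lower bound is the value
   of this linear program, certified by an explicit dual identity together with the
   convexity of m -> lam^m.  The upper bound is attained by the symmetric state spread
   over the layers k and k + 1, built from P and the normalised complement Q / (D - 1). *)

theory Submission
  imports Defs
begin

section \<open>Operators on tensor powers\<close>

definition tensor_op :: "nat \<Rightarrow> (nat \<Rightarrow> 'd \<Rightarrow> 'd \<Rightarrow> complex) \<Rightarrow> ('d::finite) op" where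
  "tensor_op n F i j = (\<Prod>k<n. F k (i k) (j k))"

definition mat_tr_prod :: "('d::finite \<Rightarrow> 'd \<Rightarrow> complex) \<Rightarrow> ('d \<Rightarrow> 'd \<Rightarrow> complex) \<Rightarrow> complex" where
  "mat_tr_prod A B = (\<Sum>a\<in>UNIV. \<Sum>b\<in>UNIV. A a b * B b a)"

definition id_mat :: "'d \<Rightarrow> 'd \<Rightarrow> complex" where
  "id_mat a b = (if a = b then 1 else 0)"

definition proj_perp :: "('d::finite \<Rightarrow> complex) \<Rightarrow> 'd \<Rightarrow> 'd \<Rightarrow> complex" where
  "proj_perp \<psi> a b = id_mat a b - proj \<psi> a b"

lemma finite_tuples [simp]: "finite (tuples n :: ('d::finite) idx set)"
  unfolding tuples_def by (auto intro: finite_PiE)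

lemma sum_tuples_prod:
  "(\<Sum>i\<in>tuples n. \<Prod>k<n. g k (i k)) = (\<Prod>k<n. \<Sum>a\<in>(UNIV::'d::finite set). (g k a :: complex))"
  unfolding tuples_def by (subst prod_sum_PiE) auto

lemma tr_prod_tensor_op:
  "tr_prod n (tensor_op n F) (tensor_op n G) = (\<Prod>k<n. mat_tr_prod (F k) (G k))"
proof -
  have "tr_prod n (tensor_op n F) (tensor_op n G) =
     (\<Sum>i\<in>tuples n. \<Sum>j\<in>tuples n. \<Prod>k<n. F k (i k) (j k) * G k (j k) (i k))"
    unfolding tr_prod_def tensor_op_def by (simp add: prod.distrib)
  also have "\<dots> = (\<Sum>i\<in>tuples n. \<Prod>k<n. \<Sum>b\<in>UNIV. F k (i k) b * G k b (i k))"
    by (intro sum.cong refl sum_tuples_prod)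
  also have "\<dots> = (\<Prod>k<n. mat_tr_prod (F k) (G k))"
    unfolding mat_tr_prod_def by (rule sum_tuples_prod)
  finally show ?thesis .
qed

lemma tensor_op_id_mat:
  assumes "i \<in> tuples n" "j \<in> tuples n"
  shows "tensor_op n (\<lambda>_. id_mat) i j = (if i = j then 1 else 0)"
proof -
  have "i = j \<longleftrightarrow> (\<forall>k<n. i k = j k)"
    using assms unfolding tuples_def by (metis PiE_ext lessThan_iff)
  then show ?thesis
    unfolding tensor_op_def id_mat_def by (auto simp: prod.neutral)
qed

lemma trace_op_eq_tr_prod: "trace_op n \<rho> = tr_prod n (tensor_op n (\<lambda>_. id_mat)) \<rho>"
  unfolding tr_prod_def trace_op_def
  by (simp add: tensor_op_id_mat if_distrib[of "\<lambda>z. z * _"] sum.delta cong: if_cong)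

lemma tr_prod_sum_left:
  "tr_prod n (\<lambda>i j. \<Sum>S\<in>A. c S * B S i j) \<rho> = (\<Sum>S\<in>A. c S * tr_prod n (B S) \<rho>)"
  unfolding tr_prod_def
  by (simp add: sum_distrib_left sum_distrib_right mult.assoc sum.swap[of _ A])

lemma tr_prod_sum_right:
  "tr_prod n M (\<lambda>i j. \<Sum>S\<in>A. c S * B S i j) = (\<Sum>S\<in>A. c S * tr_prod n M (B S))"
  unfolding tr_prod_def
  by (simp add: sum_distrib_left sum_distrib_right mult.left_commute sum.swap[of _ A])

lemma qform_sum:
  "qform n (\<lambda>i j. \<Sum>S\<in>A. c S * B S i j) v = (\<Sum>S\<in>A. c S * qform n (B S) v)"
  unfolding qform_def
  by (simp add: sum_distrib_left sum_distrib_right mult_ac sum.swap[of _ A])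

section \<open>Gram operators\<close>

definition gram_mat :: "('d::finite \<Rightarrow> 'd \<Rightarrow> complex) \<Rightarrow> bool" where
  "gram_mat A \<longleftrightarrow> (\<exists>u::'d \<Rightarrow> 'd \<Rightarrow> complex. \<forall>a b. A a b = (\<Sum>x\<in>UNIV. u x a * cnj (u x b)))"

definition gram_op :: "nat \<Rightarrow> ('d::finite) op \<Rightarrow> bool" where
  "gram_op n A \<longleftrightarrow>
     (\<exists>W::'d idx \<Rightarrow> 'd idx \<Rightarrow> complex. \<forall>i j. A i j = (\<Sum>x\<in>tuples n. W x i * cnj (W x j)))"

lemma gram_op_tensor_op:
  fixes F :: "nat \<Rightarrow> 'd::finite \<Rightarrow> 'd \<Rightarrow> complex"
  assumes "\<And>k. k < n \<Longrightarrow> gram_mat (F k)"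
  shows "gram_op n (tensor_op n F)"
proof -
  have "\<forall>k. \<exists>u::'d \<Rightarrow> 'd \<Rightarrow> complex. k < n \<longrightarrow> (\<forall>a b. F k a b = (\<Sum>x\<in>UNIV. u x a * cnj (u x b)))"
    using assms unfolding gram_mat_def by blast
  then obtain u :: "nat \<Rightarrow> 'd \<Rightarrow> 'd \<Rightarrow> complex"
    where u: "\<And>k a b. k < n \<Longrightarrow> F k a b = (\<Sum>x\<in>UNIV. u k x a * cnj (u k x b))"
    by metis
  have factor: "tensor_op n F i j
      = (\<Sum>x\<in>tuples n. (\<Prod>k<n. u k (x k) (i k)) * cnj (\<Prod>k<n. u k (x k) (j k)))" for i j
  proof -
    have "tensor_op n F i j = (\<Prod>k<n. \<Sum>x\<in>UNIV. u k x (i k) * cnj (u k x (j k)))"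
      unfolding tensor_op_def using u by (intro prod.cong) auto
    also have "\<dots> = (\<Sum>x\<in>tuples n. \<Prod>k<n. u k (x k) (i k) * cnj (u k (x k) (j k)))"
      by (rule sum_tuples_prod[symmetric])
    finally show ?thesis by (simp add: prod.distrib)
  qed
  show ?thesis
    unfolding gram_op_def
    by (rule exI[of _ "\<lambda>x i. \<Prod>k<n. u k (x k) (i k)"], intro allI, rule factor)
qed

lemma qform_gram_op:
  fixes A :: "('d::finite) op"
  assumes "gram_op n A"
  shows "qform n A v \<in> \<real>" and "0 \<le> Re (qform n A v)"
proof -
  obtain W :: "'d idx \<Rightarrow> 'd idx \<Rightarrow> complex"
    where W: "\<And>i j. A i j = (\<Sum>x\<in>tuples n. W x i * cnj (W x j))"
    using assms unfolding gram_op_def by blast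
  define y where "y x = (\<Sum>i\<in>tuples n. cnj (v i) * W x i)" for x
  have "qform n A v
      = (\<Sum>i\<in>tuples n. \<Sum>j\<in>tuples n. \<Sum>x\<in>tuples n. (cnj (v i) * W x i) * cnj (cnj (v j) * W x j))"
    unfolding qform_def W by (simp add: sum_distrib_left sum_distrib_right mult_ac)
  also have "\<dots>
      = (\<Sum>i\<in>tuples n. \<Sum>x\<in>tuples n. \<Sum>j\<in>tuples n. (cnj (v i) * W x i) * cnj (cnj (v j) * W x j))"
    by (rule sum.cong[OF refl], rule sum.swap)
  also have "\<dots>
      = (\<Sum>x\<in>tuples n. \<Sum>i\<in>tuples n. \<Sum>j\<in>tuples n. (cnj (v i) * W x i) * cnj (cnj (v j) * W x j))"
    by (rule sum.swap)
  also have "\<dots> = (\<Sum>x\<in>tuples n. y x * cnj (y x))"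
    unfolding y_def cnj_sum sum_product ..
  also have "\<dots> = of_real (\<Sum>x\<in>tuples n. (cmod (y x))\<^sup>2)"
    by (simp only: of_real_sum complex_norm_square)
  finally show "qform n A v \<in> \<real>" and "0 \<le> Re (qform n A v)"
    by (simp_all add: sum_nonneg)
qed

lemma tr_prod_gram_op_nonneg:
  fixes A :: "('d::finite) op"
  assumes "gram_op n A" and "density_op n \<rho>"
  shows "0 \<le> Re (tr_prod n A \<rho>)"
proof -
  obtain W :: "'d idx \<Rightarrow> 'd idx \<Rightarrow> complex"
    where W: "\<And>i j. A i j = (\<Sum>x\<in>tuples n. W x i * cnj (W x j))"
    using assms(1) unfolding gram_op_def by blast
  have "tr_prod n A \<rho> = (\<Sum>i\<in>tuples n. \<Sum>j\<in>tuples n. \<Sum>x\<in>tuples n. cnj (W x j) * \<rho> j i * W x i)"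
    unfolding tr_prod_def W by (simp add: sum_distrib_left sum_distrib_right mult_ac)
  also have "\<dots> = (\<Sum>i\<in>tuples n. \<Sum>x\<in>tuples n. \<Sum>j\<in>tuples n. cnj (W x j) * \<rho> j i * W x i)"
    by (rule sum.cong[OF refl], rule sum.swap)
  also have "\<dots> = (\<Sum>x\<in>tuples n. \<Sum>i\<in>tuples n. \<Sum>j\<in>tuples n. cnj (W x j) * \<rho> j i * W x i)"
    by (rule sum.swap)
  also have "\<dots> = (\<Sum>x\<in>tuples n. qform n \<rho> (W x))"
    unfolding qform_def by (rule sum.cong[OF refl], rule sum.swap)
  finally show ?thesis
    using assms(2) unfolding density_op_def by (simp add: sum_nonneg)
qed

lemma gram_mat_proj: "gram_mat (proj (\<psi> :: 'd::finite \<Rightarrow> complex))"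
proof -
  fix x0 :: 'd
  define u where "u x a = (if x = x0 then \<psi> a else 0)" for x a
  have "proj \<psi> a b = (\<Sum>x\<in>UNIV. u x a * cnj (u x b))" for a b
    unfolding proj_def u_def by (simp add: if_distrib[of "\<lambda>z. z * _"] sum.delta cong: if_cong)
  then show ?thesis unfolding gram_mat_def by blast
qed

lemma gram_mat_scale:
  fixes A :: "'d::finite \<Rightarrow> 'd \<Rightarrow> complex"
  assumes "0 \<le> c" and "gram_mat A"
  shows "gram_mat (\<lambda>a b. of_real c * A a b)"
proof -
  obtain u :: "'d \<Rightarrow> 'd \<Rightarrow> complex" where u: "\<And>a b. A a b = (\<Sum>x\<in>UNIV. u x a * cnj (u x b))"
    using assms(2) unfolding gram_mat_def by blast
  define v where "v x a = of_real (sqrt c) * u x a" for x a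
  have sqrt_sq: "of_real (sqrt c) * of_real (sqrt c) = (of_real c :: complex)"
    using assms(1) by (simp flip: of_real_mult)
  have "v x a * cnj (v x b) = of_real c * (u x a * cnj (u x b))" for x a b
    unfolding v_def by (simp add: sqrt_sq[symmetric] mult_ac)
  then have "of_real c * A a b = (\<Sum>x\<in>UNIV. v x a * cnj (v x b))" for a b
    by (simp add: u sum_distrib_left)
  then show ?thesis unfolding gram_mat_def by blast
qed

lemma unit_vec_sum:
  assumes "unit_vec \<psi>"
  shows "(\<Sum>a\<in>UNIV. \<psi> a * cnj (\<psi> a)) = 1"
proof -
  have "(\<Sum>a\<in>UNIV. \<psi> a * cnj (\<psi> a)) = of_real (\<Sum>a\<in>UNIV. (cmod (\<psi> a))\<^sup>2)"
    by (simp only: of_real_sum complex_norm_square)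
  then show ?thesis using assms unfolding unit_vec_def by simp
qed

lemma sum_id_mat_left: "(\<Sum>x\<in>UNIV. id_mat (a::'d::finite) x * g x) = g a"
  unfolding id_mat_def by (simp add: if_distrib[of "\<lambda>z. z * _"] sum.delta' cong: if_cong)

lemma sum_id_mat_right: "(\<Sum>x\<in>UNIV. g x * id_mat x (b::'d::finite)) = g b"
  unfolding id_mat_def by (simp add: if_distrib[of "\<lambda>z. _ * z"] sum.delta cong: if_cong)

lemma mat_tr_prod_id_mat_left: "mat_tr_prod id_mat B = (\<Sum>a\<in>UNIV. B a a)"
  unfolding mat_tr_prod_def by (simp add: sum_id_mat_left)

lemma mat_tr_prod_id_mat_right: "mat_tr_prod A id_mat = (\<Sum>a\<in>UNIV. A a a)"
  unfolding mat_tr_prod_def by (simp add: sum_id_mat_right)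

lemma mat_tr_prod_diff_left:
  "mat_tr_prod (\<lambda>a b. A a b - B a b) C = mat_tr_prod A C - mat_tr_prod B C"
  unfolding mat_tr_prod_def by (simp add: algebra_simps sum_subtractf)

lemma mat_tr_prod_diff_right:
  "mat_tr_prod C (\<lambda>a b. A a b - B a b) = mat_tr_prod C A - mat_tr_prod C B"
  unfolding mat_tr_prod_def by (simp add: algebra_simps sum_subtractf)

lemma mat_tr_prod_scale_right: "mat_tr_prod C (\<lambda>a b. c * B a b) = c * mat_tr_prod C B"
  unfolding mat_tr_prod_def by (simp add: algebra_simps sum_distrib_left)

context
  fixes \<psi> :: "'d::finite \<Rightarrow> complex"
  assumes unit: "unit_vec \<psi>"
begin

lemma trace_proj: "(\<Sum>a\<in>UNIV. proj \<psi> a a) = 1"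
  using unit_vec_sum[OF unit] unfolding proj_def .

lemma trace_proj_perp: "(\<Sum>a\<in>UNIV. proj_perp \<psi> a a) = of_nat CARD('d) - 1"
  unfolding proj_perp_def id_mat_def by (simp add: sum_subtractf trace_proj)

lemma mat_tr_prod_proj_proj: "mat_tr_prod (proj \<psi>) (proj \<psi>) = 1"
proof -
  have "mat_tr_prod (proj \<psi>) (proj \<psi>) = (\<Sum>a\<in>UNIV. \<psi> a * cnj (\<psi> a)) * (\<Sum>b\<in>UNIV. \<psi> b * cnj (\<psi> b))"
    unfolding mat_tr_prod_def proj_def sum_product by (simp add: mult_ac)
  then show ?thesis using unit_vec_sum[OF unit] by simp
qed

lemma mat_tr_prod_proj_proj_perp: "mat_tr_prod (proj \<psi>) (proj_perp \<psi>) = 0"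
  unfolding proj_perp_def[abs_def] mat_tr_prod_diff_right mat_tr_prod_id_mat_right
  by (simp add: trace_proj mat_tr_prod_proj_proj)

lemma mat_tr_prod_proj_perp_proj: "mat_tr_prod (proj_perp \<psi>) (proj \<psi>) = 0"
  unfolding proj_perp_def[abs_def] mat_tr_prod_diff_left mat_tr_prod_id_mat_left
  by (simp add: trace_proj mat_tr_prod_proj_proj)

lemma mat_tr_prod_proj_perp_proj_perp:
  "mat_tr_prod (proj_perp \<psi>) (proj_perp \<psi>) = of_nat CARD('d) - 1"
  using mat_tr_prod_proj_proj_perp trace_proj_perp
  unfolding proj_perp_def[abs_def] mat_tr_prod_diff_left mat_tr_prod_id_mat_left by simp

lemma gram_mat_proj_perp: "gram_mat (proj_perp \<psi>)"
proof -
  have psi_orthogonal: "(\<Sum>x\<in>UNIV. cnj (\<psi> x) * proj_perp \<psi> x b) = 0" for b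
  proof -
    have "(\<Sum>x\<in>UNIV. cnj (\<psi> x) * proj_perp \<psi> x b)
        = (\<Sum>x\<in>UNIV. cnj (\<psi> x) * id_mat x b) - (\<Sum>x\<in>UNIV. \<psi> x * cnj (\<psi> x)) * cnj (\<psi> b)"
      unfolding proj_perp_def proj_def right_diff_distrib sum_subtractf sum_distrib_right
      by (simp add: mult_ac)
    then show ?thesis by (simp add: unit_vec_sum[OF unit] sum_id_mat_right)
  qed
  have hermitian: "cnj (proj_perp \<psi> b x) = proj_perp \<psi> x b" for b x
    by (auto simp: proj_perp_def proj_def id_mat_def)
  have idempotent: "proj_perp \<psi> a b = (\<Sum>x\<in>UNIV. proj_perp \<psi> a x * cnj (proj_perp \<psi> b x))"
    for a b
  proof -
    have "(\<Sum>x\<in>UNIV. proj_perp \<psi> a x * cnj (proj_perp \<psi> b x))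
        = (\<Sum>x\<in>UNIV. proj_perp \<psi> a x * proj_perp \<psi> x b)"
      by (simp add: hermitian)
    also have "\<dots> = (\<Sum>x\<in>UNIV. id_mat a x * proj_perp \<psi> x b)
        - \<psi> a * (\<Sum>x\<in>UNIV. cnj (\<psi> x) * proj_perp \<psi> x b)"
      by (simp add: proj_perp_def[of \<psi> a] proj_def left_diff_distrib sum_subtractf
          sum_distrib_left mult.assoc)
    finally show ?thesis by (simp add: sum_id_mat_left psi_orthogonal)
  qed
  show ?thesis
    unfolding gram_mat_def by (rule exI[of _ "\<lambda>x a. proj_perp \<psi> a x"], intro allI, rule idempotent)
qed

end

section \<open>Expansion over patterns\<close>

lemma tensor_op_if:
  assumes "S \<subseteq> {..<n}"
  shows "tensor_op n (\<lambda>k. if k \<in> S then B else A) i j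
       = (\<Prod>k\<in>S. B (i k) (j k)) * (\<Prod>k\<in>{..<n} - S. A (i k) (j k))"
proof -
  have "tensor_op n (\<lambda>k. if k \<in> S then B else A) i j
      = (\<Prod>k\<in>{..<n} \<inter> {k. k \<in> S}. B (i k) (j k)) * (\<Prod>k\<in>{..<n} \<inter> - {k. k \<in> S}. A (i k) (j k))"
    unfolding tensor_op_def by (simp add: if_distrib[of "\<lambda>F. F _ _"] prod.If_cases)
  also have "{..<n} \<inter> {k. k \<in> S} = S" using assms by auto
  finally show ?thesis by (simp add: Diff_eq)
qed

lemma tensor_op_binomial:
  "tensor_op n (\<lambda>k a b. A a b + c k * B a b) i j
     = (\<Sum>S\<in>Pow {..<n}. (\<Prod>k\<in>S. c k) * tensor_op n (\<lambda>k. if k \<in> S then B else A) i j)"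
proof -
  have "tensor_op n (\<lambda>k a b. A a b + c k * B a b) i j
      = (\<Sum>S\<in>Pow {..<n}. (\<Prod>k\<in>S. c k * B (i k) (j k)) * (\<Prod>k\<in>{..<n} - S. A (i k) (j k)))"
    unfolding tensor_op_def by (subst add.commute) (rule prod_add, simp)
  also have "\<dots> = (\<Sum>S\<in>Pow {..<n}. (\<Prod>k\<in>S. c k) * tensor_op n (\<lambda>k. if k \<in> S then B else A) i j)"
    by (intro sum.cong refl) (simp add: tensor_op_if prod.distrib)
  finally show ?thesis .
qed

definition pattern_op :: "('d::finite \<Rightarrow> complex) \<Rightarrow> nat \<Rightarrow> nat set \<Rightarrow> 'd op" where
  "pattern_op \<psi> n S = tensor_op n (\<lambda>k. if k \<in> S then proj_perp \<psi> else proj \<psi>)"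

definition pattern_weight :: "('d::finite \<Rightarrow> complex) \<Rightarrow> nat \<Rightarrow> 'd op \<Rightarrow> nat set \<Rightarrow> real" where
  "pattern_weight \<psi> n \<rho> S = Re (tr_prod n (pattern_op \<psi> n S) \<rho>)"

lemma tr_prod_pattern_expand:
  "tr_prod n (tensor_op n (\<lambda>k a b. proj \<psi> a b + c k * proj_perp \<psi> a b)) \<rho>
     = (\<Sum>S\<in>Pow {..<n}. (\<Prod>k\<in>S. c k) * tr_prod n (pattern_op \<psi> n S) \<rho>)"
  unfolding tensor_op_binomial[abs_def] pattern_op_def by (rule tr_prod_sum_left)

lemma trace_op_pattern_expand:
  "trace_op n \<rho> = (\<Sum>S\<in>Pow {..<n}. tr_prod n (pattern_op \<psi> n S) \<rho>)"
proof -
  have "tensor_op n (\<lambda>_. id_mat) = tensor_op n (\<lambda>k a b. proj \<psi> a b + 1 * proj_perp \<psi> a b)"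
    by (simp add: proj_perp_def)
  then show ?thesis
    unfolding trace_op_eq_tr_prod by (simp only: tr_prod_pattern_expand) simp
qed

lemma omega_tensor_eq_tensor_op:
  "omega_tensor N \<psi> lam X = tensor_op (Suc N) (\<lambda>k. if k < N then Omega \<psi> lam else X)"
  unfolding omega_tensor_def tensor_op_def by (intro ext) (simp add: prod.lessThan_Suc)

lemma Omega_eq: "Omega \<psi> lam a b = proj \<psi> a b + of_real lam * proj_perp \<psi> a b"
  unfolding Omega_def proj_perp_def id_mat_def ..

lemma p_val_pattern_expand:
  "p_val N \<psi> lam \<rho>
     = (\<Sum>S\<in>Pow {..<Suc N}. lam ^ card (S - {N}) * pattern_weight \<psi> (Suc N) \<rho> S)"
proof -
  let ?c = "\<lambda>k. of_real (if k < N then lam else 1) :: complex"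
  have "(\<lambda>k. if k < N then Omega \<psi> lam else (\<lambda>a b. if a = b then 1 else 0))
      = (\<lambda>k a b. proj \<psi> a b + ?c k * proj_perp \<psi> a b)"
    by (intro ext) (simp add: Omega_eq proj_perp_def id_mat_def)
  moreover have "(\<Prod>k\<in>S. ?c k) = of_real (lam ^ card (S - {N}))" if "S \<subseteq> {..<Suc N}" for S
  proof -
    have "(\<Prod>k\<in>S. if k < N then lam else 1) = (\<Prod>k\<in>S - {N}. lam)"
      using that by (intro prod.mono_neutral_cong_right) (auto dest: finite_subset)
    then show ?thesis by (simp flip: of_real_prod)
  qed
  ultimately show ?thesis
    unfolding p_val_def omega_tensor_eq_tensor_op pattern_weight_def
    by (simp only: tr_prod_pattern_expand) (simp add: Re_sum)
qed

lemma f_val_pattern_expand: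
  "f_val N \<psi> lam \<rho>
     = (\<Sum>S\<in>Pow {..<Suc N}. (if N \<in> S then 0 else lam ^ card S) * pattern_weight \<psi> (Suc N) \<rho> S)"
proof -
  let ?c = "\<lambda>k. of_real (if k < N then lam else 0) :: complex"
  have "(\<lambda>k. if k < N then Omega \<psi> lam else proj \<psi>)
      = (\<lambda>k a b. proj \<psi> a b + ?c k * proj_perp \<psi> a b)"
    by (intro ext) (simp add: Omega_eq)
  moreover have "(\<Prod>k\<in>S. ?c k) = of_real (if N \<in> S then 0 else lam ^ card S)"
    if "S \<subseteq> {..<Suc N}" for S
  proof -
    have "(\<Prod>k\<in>S. if k < N then lam else 0) = (if N \<in> S then 0 else lam ^ card S)"
    proof (cases "N \<in> S")
      case True
      then show ?thesis using that by (auto dest: finite_subset intro!: prod_zero bexI[of _ N])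
    next
      case False
      then have "(\<Prod>k\<in>S. if k < N then lam else 0) = (\<Prod>k\<in>S. lam)"
        using that by (intro prod.cong) (auto simp: less_Suc_eq)
      then show ?thesis using False by simp
    qed
    then show ?thesis by (simp flip: of_real_prod)
  qed
  ultimately show ?thesis
    unfolding f_val_def omega_tensor_eq_tensor_op pattern_weight_def
    by (simp only: tr_prod_pattern_expand) (simp add: Re_sum)
qed

lemma pattern_weight_nonneg:
  assumes "unit_vec \<psi>" and "density_op n \<rho>"
  shows "0 \<le> pattern_weight \<psi> n \<rho> S"
  unfolding pattern_weight_def pattern_op_def
  using assms gram_mat_proj gram_mat_proj_perp
  by (intro tr_prod_gram_op_nonneg gram_op_tensor_op) auto

section \<open>Permutation symmetry\<close>

lemma sum_tuples_permute:
  fixes g :: "('d::finite) idx \<Rightarrow> 'b::comm_monoid_add"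
  assumes "\<sigma> permutes {..<n}"
  shows "(\<Sum>i\<in>tuples n. g i) = (\<Sum>i\<in>tuples n. g (i \<circ> \<sigma>))"
proof -
  have cancel: "i \<circ> \<sigma> \<circ> inv \<sigma> = i" "i \<circ> inv \<sigma> \<circ> \<sigma> = i" for i :: "'d idx"
    using permutes_inverses[OF assms] by (auto simp: fun_eq_iff)
  have closed: "i \<circ> \<sigma> \<in> tuples n" "i \<circ> inv \<sigma> \<in> tuples n" if "i \<in> tuples n" for i :: "'d idx"
    using that permutes_not_in[OF assms] permutes_not_in[OF permutes_inv[OF assms]]
    unfolding tuples_def by (auto simp: PiE_def extensional_def)
  show ?thesis
    by (rule sum.reindex_bij_witness[where i="\<lambda>i. i \<circ> \<sigma>" and j="\<lambda>i. i \<circ> inv \<sigma>"])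
      (auto simp: cancel closed)
qed

lemma tr_prod_permute:
  assumes "perm_invariant n \<rho>" and "\<sigma> permutes {..<n}"
  shows "tr_prod n A \<rho> = tr_prod n (\<lambda>i j. A (i \<circ> \<sigma>) (j \<circ> \<sigma>)) \<rho>"
proof -
  have "tr_prod n A \<rho>
      = (\<Sum>i\<in>tuples n. \<Sum>j\<in>tuples n. A (i \<circ> \<sigma>) (j \<circ> \<sigma>) * \<rho> (j \<circ> \<sigma>) (i \<circ> \<sigma>))"
    unfolding tr_prod_def
    by (subst sum_tuples_permute[OF assms(2)],
        rule sum.cong[OF refl], rule sum_tuples_permute[OF assms(2)])
  also have "\<dots> = tr_prod n (\<lambda>i j. A (i \<circ> \<sigma>) (j \<circ> \<sigma>)) \<rho>"
    unfolding tr_prod_def using assms unfolding perm_invariant_def by (intro sum.cong refl) auto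
  finally show ?thesis .
qed

lemma tensor_op_if_permute:
  assumes "\<sigma> permutes {..<n}"
  shows "tensor_op n (\<lambda>k. if k \<in> S then B else A) (i \<circ> \<sigma>) (j \<circ> \<sigma>)
       = tensor_op n (\<lambda>k. if k \<in> \<sigma> ` S then B else A) i j"
proof -
  have "tensor_op n (\<lambda>k. if k \<in> S then B else A) (i \<circ> \<sigma>) (j \<circ> \<sigma>)
      = prod ((\<lambda>k. (if k \<in> \<sigma> ` S then B else A) (i k) (j k)) \<circ> \<sigma>) {..<n}"
    unfolding tensor_op_def using permutes_inj[OF assms]
    by (intro prod.cong) (auto simp: inj_image_mem_iff)
  also have "\<dots> = tensor_op n (\<lambda>k. if k \<in> \<sigma> ` S then B else A) i j"
    unfolding tensor_op_def by (rule prod.permute[OF assms, symmetric])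
  finally show ?thesis .
qed

lemma pattern_weight_transpose:
  assumes "perm_invariant n \<rho>" and "x < n" and "y < n"
  shows "pattern_weight \<psi> n \<rho> (Transposition.transpose x y ` S) = pattern_weight \<psi> n \<rho> S"
proof -
  let ?t = "Transposition.transpose x y"
  have t: "?t permutes {..<n}" using assms by (intro permutes_swap_id) auto
  have "tr_prod n (pattern_op \<psi> n S) \<rho> = tr_prod n (\<lambda>i j. pattern_op \<psi> n S (i \<circ> ?t) (j \<circ> ?t)) \<rho>"
    by (rule tr_prod_permute[OF assms(1) t])
  then show ?thesis
    unfolding pattern_weight_def pattern_op_def tensor_op_if_permute[OF t] by simp
qed

definition subsets_card :: "nat \<Rightarrow> nat \<Rightarrow> nat set set" where
  "subsets_card n m = {S. S \<subseteq> {..<n} \<and> card S = m}"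

lemma finite_subsets_card [simp]: "finite (subsets_card n m)"
  unfolding subsets_card_def by (rule finite_subset[of _ "Pow {..<n}"]) auto

lemma sum_Pow_by_card:
  "(\<Sum>S\<in>Pow {..<n}. g S) = (\<Sum>m\<le>n. \<Sum>S\<in>subsets_card n m. g S)"
proof -
  have "(\<Sum>m\<le>n. \<Sum>S\<in>{S \<in> Pow {..<n}. card S = m}. g S) = (\<Sum>S\<in>Pow {..<n}. g S)"
    by (rule sum.group) (auto intro: card_mono[of "{..<n}", simplified])
  moreover have "{S \<in> Pow {..<n}. card S = m} = subsets_card n m" for m
    unfolding subsets_card_def by auto
  ultimately show ?thesis by simp
qed

lemma sum_subsets_card_containing:
  fixes w :: "nat set \<Rightarrow> real"
  assumes "y < n"
    and inv: "\<And>x S. x < n \<Longrightarrow> S \<subseteq> {..<n} \<Longrightarrow> w (Transposition.transpose x y ` S) = w S"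
  shows "real n * (\<Sum>S\<in>subsets_card n m. if y \<in> S then w S else 0)
       = real m * (\<Sum>S\<in>subsets_card n m. w S)"
proof -
  have each_point: "(\<Sum>S\<in>subsets_card n m. if x \<in> S then w S else 0)
      = (\<Sum>S\<in>subsets_card n m. if y \<in> S then w S else 0)" if x: "x < n" for x
  proof -
    let ?t = "Transposition.transpose x y"
    have t: "?t permutes {..<n}" using x assms(1) by (intro permutes_swap_id) auto
    have closed: "?t ` S \<in> subsets_card n m" if "S \<in> subsets_card n m" for S
      using that permutes_image[OF t] card_image[of ?t S] unfolding subsets_card_def
      by (auto simp: image_mono[THEN order_trans])
    have moved: "(if y \<in> ?t ` S then w (?t ` S) else 0) = (if x \<in> S then w S else 0)"
      if "S \<in> subsets_card n m" for S
    proof -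
      have "w (?t ` S) = w S" using that x unfolding subsets_card_def by (intro inv) auto
      then show ?thesis by (simp add: in_transpose_image_iff)
    qed
    show ?thesis
      by (rule sum.reindex_bij_witness[where i="\<lambda>S. ?t ` S" and j="\<lambda>S. ?t ` S"])
        (simp_all add: image_image closed moved)
  qed
  have "real m * (\<Sum>S\<in>subsets_card n m. w S) = (\<Sum>S\<in>subsets_card n m. \<Sum>x<n. if x \<in> S then w S else 0)"
  proof (subst sum_distrib_left, rule sum.cong[OF refl])
    fix S assume "S \<in> subsets_card n m"
    then have "S \<subseteq> {..<n}" and "card S = m" unfolding subsets_card_def by auto
    then show "real m * w S = (\<Sum>x<n. if x \<in> S then w S else 0)"
      by (simp add: sum.If_cases Int_absorb1)
  qed
  also have "\<dots> = (\<Sum>x<n. \<Sum>S\<in>subsets_card n m. if x \<in> S then w S else 0)"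
    by (rule sum.swap)
  also have "\<dots> = real n * (\<Sum>S\<in>subsets_card n m. if y \<in> S then w S else 0)"
    by (simp add: each_point)
  finally show ?thesis by simp
qed

section \<open>The linear program over layers\<close>

definition layer_weight :: "('d::finite \<Rightarrow> complex) \<Rightarrow> nat \<Rightarrow> 'd op \<Rightarrow> nat \<Rightarrow> real" where
  "layer_weight \<psi> n \<rho> m = (\<Sum>S\<in>subsets_card n m. pattern_weight \<psi> n \<rho> S)"

text \<open>The values of p and f on a symmetric state concentrated on the patterns with
  m factors Q: a fraction m / (N + 1) of these patterns carries Q on the last factor,
  which contributes 1 instead of lam to p and 0 to f.\<close>

definition layer_p :: "nat \<Rightarrow> real \<Rightarrow> nat \<Rightarrow> real" where
  "layer_p N lam m = (real m * lam ^ (m - 1) + (real (Suc N) - real m) * lam ^ m) / real (Suc N)"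

definition layer_f :: "nat \<Rightarrow> real \<Rightarrow> nat \<Rightarrow> real" where
  "layer_f N lam m = (real (Suc N) - real m) * lam ^ m / real (Suc N)"

lemma sum_subsets_card_split:
  fixes w :: "nat set \<Rightarrow> real"
  assumes "y < n"
    and "\<And>x S. x < n \<Longrightarrow> S \<subseteq> {..<n} \<Longrightarrow> w (Transposition.transpose x y ` S) = w S"
  shows "(\<Sum>S\<in>subsets_card n m. (if y \<in> S then a else b) * w S)
       = (\<Sum>S\<in>subsets_card n m. w S) * ((real m * a + (real n - real m) * b) / real n)"
proof -
  let ?A = "\<Sum>S\<in>subsets_card n m. w S"
  let ?B = "\<Sum>S\<in>subsets_card n m. if y \<in> S then w S else 0"
  have "(\<Sum>S\<in>subsets_card n m. (if y \<in> S then a else b) * w S)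
      = (\<Sum>S\<in>subsets_card n m.
           a * (if y \<in> S then w S else 0) + b * (w S - (if y \<in> S then w S else 0)))"
    by (intro sum.cong) auto
  also have "\<dots> = a * ?B + b * (?A - ?B)"
    by (simp add: sum.distrib sum_subtractf flip: sum_distrib_left)
  also have "\<dots> = ?A * ((real m * a + (real n - real m) * b) / real n)"
    using sum_subsets_card_containing[OF assms, of m] assms(1) by (simp add: field_simps)
  finally show ?thesis .
qed

lemma p_val_layers:
  assumes "perm_invariant (Suc N) \<rho>"
  shows "p_val N \<psi> lam \<rho> = (\<Sum>m\<le>Suc N. layer_weight \<psi> (Suc N) \<rho> m * layer_p N lam m)"
proof -
  have "p_val N \<psi> lam \<rho> = (\<Sum>m\<le>Suc N. \<Sum>S\<in>subsets_card (Suc N) m.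
          lam ^ card (S - {N}) * pattern_weight \<psi> (Suc N) \<rho> S)"
    unfolding p_val_pattern_expand by (rule sum_Pow_by_card)
  also have "\<dots> = (\<Sum>m\<le>Suc N. \<Sum>S\<in>subsets_card (Suc N) m.
          (if N \<in> S then lam ^ (m - 1) else lam ^ m) * pattern_weight \<psi> (Suc N) \<rho> S)"
    by (intro sum.cong refl) (auto simp: subsets_card_def card_Diff_singleton dest: finite_subset)
  also have "\<dots> = (\<Sum>m\<le>Suc N. layer_weight \<psi> (Suc N) \<rho> m * layer_p N lam m)"
    unfolding layer_weight_def layer_p_def
    by (simp add: sum_subsets_card_split pattern_weight_transpose[OF assms])
  finally show ?thesis .
qed

lemma f_val_layers:
  assumes "perm_invariant (Suc N) \<rho>"
  shows "f_val N \<psi> lam \<rho> = (\<Sum>m\<le>Suc N. layer_weight \<psi> (Suc N) \<rho> m * layer_f N lam m)"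
proof -
  have "f_val N \<psi> lam \<rho> = (\<Sum>m\<le>Suc N. \<Sum>S\<in>subsets_card (Suc N) m.
          (if N \<in> S then 0 else lam ^ card S) * pattern_weight \<psi> (Suc N) \<rho> S)"
    unfolding f_val_pattern_expand by (rule sum_Pow_by_card)
  also have "\<dots> = (\<Sum>m\<le>Suc N. \<Sum>S\<in>subsets_card (Suc N) m.
          (if N \<in> S then 0 else lam ^ m) * pattern_weight \<psi> (Suc N) \<rho> S)"
    by (intro sum.cong refl) (auto simp: subsets_card_def)
  also have "\<dots> = (\<Sum>m\<le>Suc N. layer_weight \<psi> (Suc N) \<rho> m * layer_f N lam m)"
    unfolding layer_weight_def layer_f_def
    by (simp add: sum_subsets_card_split pattern_weight_transpose[OF assms])
  finally show ?thesis .
qed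

lemma sum_layer_weight: "(\<Sum>m\<le>n. layer_weight \<psi> n \<rho> m) = Re (trace_op n \<rho>)"
  unfolding layer_weight_def pattern_weight_def trace_op_pattern_expand[of _ _ \<psi>] Re_sum
  by (rule sum_Pow_by_card[symmetric])

lemma layer_weight_nonneg:
  assumes "unit_vec \<psi>" and "density_op n \<rho>"
  shows "0 \<le> layer_weight \<psi> n \<rho> m"
  unfolding layer_weight_def using pattern_weight_nonneg[OF assms] by (simp add: sum_nonneg)

lemma power_ge_linear_extrapolation:
  fixes x :: real
  assumes "0 < x"
  shows "x ^ a * (1 + (real b - real a) * (x - 1)) \<le> x ^ b"
proof (cases "a \<le> b")
  case True
  then obtain s where b: "b = a + s" using le_Suc_ex by blast
  have "1 + real s * (x - 1) \<le> x ^ s"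
    using Bernoulli_inequality[of "x - 1" s] assms by simp
  then show ?thesis using assms by (simp add: b power_add mult_left_mono)
next
  case False
  then obtain s where a: "a = b + s" by (metis le_Suc_ex nat_le_linear)
  have "1 - x \<le> 1 / x - 1"
  proof -
    have "1 / x - 1 - (1 - x) = (x - 1)\<^sup>2 / x"
      using assms by (simp add: field_simps power2_eq_square)
    moreover have "0 \<le> (x - 1)\<^sup>2 / x" using assms by simp
    ultimately show ?thesis by linarith
  qed
  then have "1 + real s * (1 - x) \<le> 1 + real s * (1 / x - 1)" by (simp add: mult_left_mono)
  also have "\<dots> \<le> (1 / x) ^ s" using Bernoulli_inequality[of "1 / x - 1" s] assms by simp
  finally have "x ^ s * (1 + real s * (1 - x)) \<le> 1"
    using assms by (simp add: power_one_over pos_le_divide_eq mult.commute)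
  then have "x ^ b * (x ^ s * (1 + real s * (1 - x))) \<le> x ^ b"
    using assms by (simp add: mult_left_le)
  then show ?thesis by (simp add: a power_add algebra_simps)
qed

definition fidelity_bound :: "nat \<Rightarrow> real \<Rightarrow> real \<Rightarrow> real" where
  "fidelity_bound N lam k = (real N - k) * lam / (k + (real N - k) * lam)"

text \<open>Dual certificate of the linear program: summed against the layer weights, the
  right-hand side, which is nonnegative by convexity of m \<mapsto> lam ^ m, yields
  (1 - lam) (D f - (N - k) lam p) \<ge> lam (p - lam ^ k).\<close>

lemma layer_dual_identity:
  "(1 - lam) * ((real k + (real N - real k) * lam) * layer_f N lam m
                - (real N - real k) * lam * layer_p N lam m)
     - lam * (layer_p N lam m - lam ^ k)
   = lam ^ (k + 1) - lam ^ m * (1 + (real (k + 1) - real m) * (lam - 1))"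
proof (cases m)
  case 0
  then show ?thesis unfolding layer_p_def layer_f_def by (simp add: field_simps)
next
  case (Suc j)
  show ?thesis unfolding Suc layer_p_def layer_f_def by (simp add: divide_simps) algebra
qed

lemma layer_mixture_lower_bound:
  fixes A :: "nat \<Rightarrow> real"
  assumes lam: "0 < lam" "lam < 1"
    and A: "\<And>m. 0 \<le> A m" "(\<Sum>m\<le>Suc N. A m) = 1"
    and p: "lam ^ k \<le> (\<Sum>m\<le>Suc N. A m * layer_p N lam m)"
  shows "(real N - real k) * lam * (\<Sum>m\<le>Suc N. A m * layer_p N lam m)
       \<le> (real k + (real N - real k) * lam) * (\<Sum>m\<le>Suc N. A m * layer_f N lam m)"
proof -
  let ?P = "\<Sum>m\<le>Suc N. A m * layer_p N lam m"
  let ?F = "\<Sum>m\<le>Suc N. A m * layer_f N lam m"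
  let ?D = "real k + (real N - real k) * lam"
  have "0 \<le> (\<Sum>m\<le>Suc N. A m * (lam ^ (k + 1) - lam ^ m * (1 + (real (k + 1) - real m) * (lam - 1))))"
  proof -
    have "0 \<le> lam ^ (k + 1) - lam ^ m * (1 + (real (k + 1) - real m) * (lam - 1))" for m
      using power_ge_linear_extrapolation[OF lam(1), of m "k + 1"] by linarith
    then show ?thesis using A(1) by (intro sum_nonneg mult_nonneg_nonneg)
  qed
  also have "\<dots> = (\<Sum>m\<le>Suc N. A m *
      ((1 - lam) * (?D * layer_f N lam m - (real N - real k) * lam * layer_p N lam m)
        - lam * (layer_p N lam m - lam ^ k)))"
    by (simp only: layer_dual_identity)
  also have "\<dots> = (1 - lam) * (?D * ?F - (real N - real k) * lam * ?P)
                     - lam * (?P - lam ^ k * (\<Sum>m\<le>Suc N. A m))"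
    by (simp add: algebra_simps sum_distrib_left sum_distrib_right sum.distrib sum_subtractf)
  finally have "lam * (?P - lam ^ k) \<le> (1 - lam) * (?D * ?F - (real N - real k) * lam * ?P)"
    using A(2) by simp
  moreover have "0 \<le> lam * (?P - lam ^ k)" using p lam by simp
  ultimately have "0 \<le> (1 - lam) * (?D * ?F - (real N - real k) * lam * ?P)" by linarith
  then show ?thesis using lam by (simp add: zero_le_mult_iff)
qed

lemma layer_p_scaled:
  "real (Suc N) * layer_p N lam m = real m * lam ^ (m - 1) + (real (Suc N) - real m) * lam ^ m"
  unfolding layer_p_def by simp

lemma layer_f_scaled:
  "real (Suc N) * layer_f N lam m = (real (Suc N) - real m) * lam ^ m"
  unfolding layer_f_def by simp

lemma two_layer_mixture_p:
  assumes "real k + (real N - real k) * lam \<noteq> 0"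
  shows "fidelity_bound N lam (real k) * layer_p N lam k
           + (1 - fidelity_bound N lam (real k)) * layer_p N lam (Suc k) = lam ^ k"
proof -
  let ?t = "fidelity_bound N lam (real k)"
  let ?D = "real k + (real N - real k) * lam" and ?n = "real (Suc N)"
  have t: "?t * ?D = (real N - real k) * lam" using assms unfolding fidelity_bound_def by simp
  have "?D * (?n * (?t * layer_p N lam k + (1 - ?t) * layer_p N lam (Suc k)))
      = (?t * ?D) * (?n * layer_p N lam k) + (?D - ?t * ?D) * (?n * layer_p N lam (Suc k))"
    by (simp add: algebra_simps)
  also have "\<dots> = (real N - real k) * lam * (?n * layer_p N lam k)
                   + real k * (?n * layer_p N lam (Suc k))"
    unfolding t by simp
  also have "\<dots> = ?D * (?n * lam ^ k)"
    unfolding layer_p_scaled by (cases k) (simp_all add: algebra_simps)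
  finally show ?thesis using assms by simp
qed

lemma two_layer_mixture_f:
  assumes "real k + (real N - real k) * lam \<noteq> 0"
  shows "fidelity_bound N lam (real k) * layer_f N lam k
           + (1 - fidelity_bound N lam (real k)) * layer_f N lam (Suc k)
         = fidelity_bound N lam (real k) * lam ^ k"
proof -
  let ?t = "fidelity_bound N lam (real k)"
  let ?D = "real k + (real N - real k) * lam" and ?n = "real (Suc N)"
  have t: "?t * ?D = (real N - real k) * lam" using assms unfolding fidelity_bound_def by simp
  have "?D * (?n * (?t * layer_f N lam k + (1 - ?t) * layer_f N lam (Suc k)))
      = (?t * ?D) * (?n * layer_f N lam k) + (?D - ?t * ?D) * (?n * layer_f N lam (Suc k))"
    by (simp add: algebra_simps)
  also have "\<dots> = (real N - real k) * lam * (?n * layer_f N lam k)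
                   + real k * (?n * layer_f N lam (Suc k))"
    unfolding t by simp
  also have "\<dots> = ?n * lam ^ k * ((real N - real k) * lam)"
    unfolding layer_f_scaled by (simp add: algebra_simps)
  also have "\<dots> = ?n * lam ^ k * (?t * ?D)"
    by (simp only: t)
  also have "\<dots> = ?D * (?n * (?t * lam ^ k))"
    by (simp add: algebra_simps)
  finally show ?thesis using assms by simp
qed

section \<open>Symmetric extremal states\<close>

definition perp_state :: "('d::finite \<Rightarrow> complex) \<Rightarrow> 'd \<Rightarrow> 'd \<Rightarrow> complex" where
  "perp_state \<psi> a b = of_real (1 / (real CARD('d) - 1)) * proj_perp \<psi> a b"

definition pattern_state :: "('d::finite \<Rightarrow> complex) \<Rightarrow> nat \<Rightarrow> nat set \<Rightarrow> 'd op" where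
  "pattern_state \<psi> n S = tensor_op n (\<lambda>k. if k \<in> S then perp_state \<psi> else proj \<psi>)"

definition symmetric_mixture :: "('d::finite \<Rightarrow> complex) \<Rightarrow> nat \<Rightarrow> (nat \<Rightarrow> real) \<Rightarrow> 'd op" where
  "symmetric_mixture \<psi> n q = (\<lambda>i j. \<Sum>S\<in>Pow {..<n}. of_real (q (card S)) * pattern_state \<psi> n S i j)"

lemma perm_invariant_symmetric_mixture: "perm_invariant n (symmetric_mixture \<psi> n q)"
  unfolding perm_invariant_def
proof (intro allI impI ballI)
  fix \<sigma> and i j :: "'a idx"
  assume \<sigma>: "\<sigma> permutes {..<n}"
  have "card (\<sigma> ` S) = card S" for S
    using permutes_inj[OF \<sigma>] by (simp add: card_image inj_on_subset)
  then have "symmetric_mixture \<psi> n q (i \<circ> \<sigma>) (j \<circ> \<sigma>)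
      = (\<Sum>S\<in>Pow {..<n}. of_real (q (card (\<sigma> ` S))) * pattern_state \<psi> n (\<sigma> ` S) i j)"
    unfolding symmetric_mixture_def pattern_state_def tensor_op_if_permute[OF \<sigma>] by simp
  also have "\<dots> = symmetric_mixture \<psi> n q i j"
    unfolding symmetric_mixture_def
    by (rule sum.reindex_bij_betw[OF bij_betw_Pow[OF permutes_imp_bij[OF \<sigma>]]])
  finally show "symmetric_mixture \<psi> n q (i \<circ> \<sigma>) (j \<circ> \<sigma>) = symmetric_mixture \<psi> n q i j" .
qed

lemma gram_op_pattern_state:
  assumes "unit_vec \<psi>"
  shows "gram_op n (pattern_state \<psi> n S)"
proof -
  have "gram_mat (perp_state \<psi>)"
    unfolding perp_state_def[abs_def]
    by (rule gram_mat_scale) (simp_all add: gram_mat_proj_perp[OF assms])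
  then show ?thesis
    unfolding pattern_state_def by (intro gram_op_tensor_op) (simp add: gram_mat_proj)
qed

context
  fixes \<psi> :: "'d::finite \<Rightarrow> complex"
  assumes unit: "unit_vec \<psi>" and dim: "CARD('d) \<ge> 2"
begin

lemma mat_tr_prod_proj_perp_state: "mat_tr_prod (proj_perp \<psi>) (perp_state \<psi>) = 1"
proof -
  have "of_nat CARD('d) - 1 = (of_real (real CARD('d) - 1) :: complex)" by simp
  moreover have "real CARD('d) - 1 \<noteq> 0" using dim by simp
  ultimately show ?thesis
    unfolding perp_state_def[abs_def] mat_tr_prod_scale_right
      mat_tr_prod_proj_perp_proj_perp[OF unit]
    by (simp flip: of_real_mult)
qed

lemma mat_tr_prod_proj_perp_state_zero: "mat_tr_prod (proj \<psi>) (perp_state \<psi>) = 0"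
  unfolding perp_state_def[abs_def] mat_tr_prod_scale_right mat_tr_prod_proj_proj_perp[OF unit]
  by simp

lemma tr_prod_pattern_op_state:
  assumes "S \<subseteq> {..<n}" and "T \<subseteq> {..<n}"
  shows "tr_prod n (pattern_op \<psi> n S) (pattern_state \<psi> n T) = (if S = T then 1 else 0)"
proof -
  have "tr_prod n (pattern_op \<psi> n S) (pattern_state \<psi> n T)
      = (\<Prod>k<n. if k \<in> S \<longleftrightarrow> k \<in> T then 1 else 0)"
    unfolding pattern_op_def pattern_state_def tr_prod_tensor_op
    by (intro prod.cong refl)
      (simp add: mat_tr_prod_proj_perp_state mat_tr_prod_proj_perp_state_zero
        mat_tr_prod_proj_proj[OF unit] mat_tr_prod_proj_perp_proj[OF unit])
  also have "\<dots> = (if S = T then 1 else 0)"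
    using assms by (auto intro!: prod_zero simp: set_eq_iff)
  finally show ?thesis .
qed

lemma tr_prod_pattern_op_symmetric_mixture:
  assumes "S \<subseteq> {..<n}"
  shows "tr_prod n (pattern_op \<psi> n S) (symmetric_mixture \<psi> n q) = of_real (q (card S))"
proof -
  have "tr_prod n (pattern_op \<psi> n S) (symmetric_mixture \<psi> n q)
      = (\<Sum>T\<in>Pow {..<n}. if S = T then of_real (q (card T)) else 0)"
    unfolding symmetric_mixture_def tr_prod_sum_right
    by (intro sum.cong refl) (simp add: tr_prod_pattern_op_state assms)
  also have "\<dots> = of_real (q (card S))" using assms by simp
  finally show ?thesis .
qed

lemma density_symmetric_mixture:
  assumes "\<And>m. 0 \<le> q m" and "(\<Sum>S\<in>Pow {..<n}. q (card S)) = 1"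
  shows "density_op n (symmetric_mixture \<psi> n q)"
  unfolding density_op_def
proof (intro conjI allI)
  fix v
  have qform: "qform n (symmetric_mixture \<psi> n q) v
      = (\<Sum>S\<in>Pow {..<n}. of_real (q (card S)) * qform n (pattern_state \<psi> n S) v)"
    unfolding symmetric_mixture_def by (rule qform_sum)
  note psd = qform_gram_op[OF gram_op_pattern_state[OF unit]]
  show "qform n (symmetric_mixture \<psi> n q) v \<in> \<real>"
    unfolding qform using psd(1) by (intro sum_in_Reals Reals_mult) auto
  show "0 \<le> Re (qform n (symmetric_mixture \<psi> n q) v)"
    unfolding qform Re_sum using psd(2) assms(1) by (intro sum_nonneg) simp
next
  show "trace_op n (symmetric_mixture \<psi> n q) = 1"
    unfolding trace_op_pattern_expand[of _ _ \<psi>]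
    using assms(2) by (simp add: tr_prod_pattern_op_symmetric_mixture flip: of_real_sum)
qed

lemma layer_weight_symmetric_mixture:
  "layer_weight \<psi> n (symmetric_mixture \<psi> n q) m = (\<Sum>S\<in>subsets_card n m. q (card S))"
  unfolding layer_weight_def pattern_weight_def
  by (intro sum.cong refl) (simp add: subsets_card_def tr_prod_pattern_op_symmetric_mixture)

end

section \<open>Bounds on F\<close>

lemma fidelity_bound_denom_pos:
  assumes "1 \<le> N" and "k \<le> N" and "0 < lam"
  shows "0 < real k + (real N - real k) * lam"
proof (cases "k = 0")
  case True
  then show ?thesis using assms by simp
next
  case False
  then show ?thesis using assms by (simp add: add_pos_nonneg)
qed

lemma fidelity_ratio_lower_bound:
  assumes "unit_vec \<psi>" and "1 \<le> N" and "k \<le> N" and lam: "0 < lam" "lam < 1"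
    and \<rho>: "density_op (Suc N) \<rho>" "perm_invariant (Suc N) \<rho>"
    and p: "lam ^ k \<le> p_val N \<psi> lam \<rho>"
  shows "fidelity_bound N lam (real k) \<le> f_val N \<psi> lam \<rho> / p_val N \<psi> lam \<rho>"
proof -
  have "0 < lam ^ k" using lam by simp
  then have "0 < p_val N \<psi> lam \<rho>" using p by linarith
  moreover have "(real N - real k) * lam * p_val N \<psi> lam \<rho>
      \<le> (real k + (real N - real k) * lam) * f_val N \<psi> lam \<rho>"
    unfolding p_val_layers[OF \<rho>(2)] f_val_layers[OF \<rho>(2)]
  proof (rule layer_mixture_lower_bound[OF lam])
    show "0 \<le> layer_weight \<psi> (Suc N) \<rho> m" for m by (rule layer_weight_nonneg[OF assms(1) \<rho>(1)])
    show "(\<Sum>m\<le>Suc N. layer_weight \<psi> (Suc N) \<rho> m) = 1"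
      using \<rho>(1) unfolding sum_layer_weight density_op_def by simp
    show "lam ^ k \<le> (\<Sum>m\<le>Suc N. layer_weight \<psi> (Suc N) \<rho> m * layer_p N lam m)"
      using p unfolding p_val_layers[OF \<rho>(2)] .
  qed
  ultimately show ?thesis
    using fidelity_bound_denom_pos[OF assms(2,3) lam(1)]
    unfolding fidelity_bound_def by (simp add: divide_simps mult.commute)
qed

lemma symmetric_state_attaining_bound:
  fixes \<psi> :: "'d::finite \<Rightarrow> complex"
  assumes "unit_vec \<psi>" and "CARD('d) \<ge> 2" and "1 \<le> N" and "k \<le> N" and "0 < lam"
  shows "\<exists>\<rho>. density_op (Suc N) \<rho> \<and> perm_invariant (Suc N) \<rho> \<and> p_val N \<psi> lam \<rho> = lam ^ k
            \<and> f_val N \<psi> lam \<rho> = fidelity_bound N lam (real k) * lam ^ k"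
proof -
  let ?D = "real k + (real N - real k) * lam"
  define t where "t = fidelity_bound N lam (real k)"
  define a where "a m = (if m = k then t else if m = Suc k then 1 - t else 0)" for m
  define q where "q m = a m / real (card (subsets_card (Suc N) m))" for m
  define \<rho> where "\<rho> = symmetric_mixture \<psi> (Suc N) q"
  have D: "0 < ?D" by (rule fidelity_bound_denom_pos) fact+
  have t: "0 \<le> t" "0 \<le> 1 - t"
  proof -
    have "1 - t = real k / ?D" using D unfolding t_def fidelity_bound_def by (simp add: field_simps)
    then show "0 \<le> 1 - t" using D by simp
    show "0 \<le> t" using D assms(4,5) unfolding t_def fidelity_bound_def by simp
  qed
  have layer: "(\<Sum>S\<in>subsets_card (Suc N) m. q (card S)) = a m" if "m \<le> Suc N" for m
  proof -
    have "{..<m} \<in> subsets_card (Suc N) m" using that unfolding subsets_card_def by auto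
    then have "card (subsets_card (Suc N) m) \<noteq> 0" by (auto simp: card_eq_0_iff)
    moreover have "(\<Sum>S\<in>subsets_card (Suc N) m. q (card S))
        = real (card (subsets_card (Suc N) m)) * q m"
      by (simp add: subsets_card_def)
    ultimately show ?thesis unfolding q_def by simp
  qed
  have two_point: "(\<Sum>m\<le>Suc N. a m * g m) = t * g k + (1 - t) * g (Suc k)" for g
  proof -
    have "(\<Sum>m\<le>Suc N. a m * g m)
        = (\<Sum>m\<le>Suc N. (if m = k then t * g k else 0)
                         + (if m = Suc k then (1 - t) * g (Suc k) else 0))"
      unfolding a_def by (intro sum.cong) auto
    then show ?thesis using assms(4) by (simp add: sum.distrib)
  qed
  have weights: "layer_weight \<psi> (Suc N) \<rho> m = a m" if "m \<le> Suc N" for m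
    unfolding \<rho>_def layer_weight_symmetric_mixture[OF assms(1,2)] using that by (rule layer)
  have inv: "perm_invariant (Suc N) \<rho>"
    unfolding \<rho>_def by (rule perm_invariant_symmetric_mixture)
  have "density_op (Suc N) \<rho>"
    unfolding \<rho>_def
  proof (rule density_symmetric_mixture[OF assms(1,2)])
    show "0 \<le> q m" for m unfolding q_def a_def using t by simp
    show "(\<Sum>S\<in>Pow {..<Suc N}. q (card S)) = 1"
      unfolding sum_Pow_by_card using two_point[of "\<lambda>_. 1"] by (simp add: layer)
  qed
  moreover have "p_val N \<psi> lam \<rho> = lam ^ k"
    unfolding p_val_layers[OF inv] using two_point two_layer_mixture_p[of k N lam] D
    by (simp add: weights t_def)
  moreover have "f_val N \<psi> lam \<rho> = t * lam ^ k"
    unfolding f_val_layers[OF inv] using two_point two_layer_mixture_f[of k N lam] D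
    by (simp add: weights t_def)
  ultimately show ?thesis using inv unfolding t_def by blast
qed

lemma F_fid_between_bounds:
  fixes \<psi> :: "'d::finite \<Rightarrow> complex"
  assumes "unit_vec \<psi>" and "CARD('d) \<ge> 2" and "1 \<le> N" and lam: "0 < lam" "lam < 1"
    and "kp \<le> N" and "lam ^ kp \<le> \<delta>" and "km \<le> N" and "\<delta> \<le> lam ^ km"
  shows "fidelity_bound N lam (real kp) \<le> F_fid N \<delta> lam \<psi>
       \<and> F_fid N \<delta> lam \<psi> \<le> fidelity_bound N lam (real km)"
proof -
  define R where "R = {f_val N \<psi> lam \<rho> / p_val N \<psi> lam \<rho> | \<rho>.
       density_op (Suc N) \<rho> \<and> perm_invariant (Suc N) \<rho> \<and> p_val N \<psi> lam \<rho> \<ge> \<delta>}"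
  have lower: "fidelity_bound N lam (real kp) \<le> r" if "r \<in> R" for r
    using that assms(7) fidelity_ratio_lower_bound[OF assms(1,3,6) lam]
    unfolding R_def by fastforce
  obtain \<rho> where \<rho>: "density_op (Suc N) \<rho>" "perm_invariant (Suc N) \<rho>"
    and p: "p_val N \<psi> lam \<rho> = lam ^ km"
    and f: "f_val N \<psi> lam \<rho> = fidelity_bound N lam (real km) * lam ^ km"
    using symmetric_state_attaining_bound[OF assms(1-3,8) lam(1)] by blast
  have ratio: "fidelity_bound N lam (real km) = f_val N \<psi> lam \<rho> / p_val N \<psi> lam \<rho>"
    using lam by (simp add: p f)
  have attained: "fidelity_bound N lam (real km) \<in> R"
    unfolding R_def mem_Collect_eq
    by (intro exI[of _ \<rho>]) (simp add: ratio \<rho> p assms(9))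
  have "fidelity_bound N lam (real kp) \<le> Inf R"
    using attained lower by (intro cInf_greatest) auto
  moreover have "Inf R \<le> fidelity_bound N lam (real km)"
    using attained lower by (intro cInf_lower bdd_belowI) auto
  ultimately show ?thesis unfolding F_fid_def R_def by simp
qed

lemma power_le_iff_log_le:
  fixes lam \<delta> :: real
  assumes "0 < lam" "lam < 1" "0 < \<delta>"
  shows "lam ^ k \<le> \<delta> \<longleftrightarrow> log lam \<delta> \<le> real k"
proof -
  have "lam ^ k \<le> \<delta> \<longleftrightarrow> real k * ln lam \<le> ln \<delta>"
    using assms by (simp add: ln_realpow flip: ln_le_cancel_iff)
  also have "\<dots> \<longleftrightarrow> log lam \<delta> \<le> real k"
    using assms unfolding log_def by (simp add: divide_le_eq)
  finally show ?thesis .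
qed

lemma le_power_iff_le_log:
  fixes lam \<delta> :: real
  assumes "0 < lam" "lam < 1" "0 < \<delta>"
  shows "\<delta> \<le> lam ^ k \<longleftrightarrow> real k \<le> log lam \<delta>"
proof -
  have "\<delta> \<le> lam ^ k \<longleftrightarrow> ln \<delta> \<le> real k * ln lam"
    using assms by (simp add: ln_realpow flip: ln_le_cancel_iff)
  also have "\<dots> \<longleftrightarrow> real k \<le> log lam \<delta>"
    using assms unfolding log_def by (simp add: le_divide_eq)
  finally show ?thesis .
qed

theorem corollary3:
  fixes \<psi> :: "'d::finite \<Rightarrow> complex" and N :: nat and lam \<delta> :: real
  assumes "CARD('d) \<ge> 2" and "unit_vec \<psi>"
    and "N \<ge> 1" and "0 < lam" and "lam < 1"
    and "lam ^ N \<le> \<delta>" and "\<delta> \<le> 1"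
  defines "kp \<equiv> \<lceil>log lam \<delta>\<rceil>" and "km \<equiv> \<lfloor>log lam \<delta>\<rfloor>"
  shows "(real N - of_int kp) * lam / (of_int kp + (real N - of_int kp) * lam) \<le> F_fid N \<delta> lam \<psi>
       \<and> F_fid N \<delta> lam \<psi> \<le> (real N - of_int km) * lam / (of_int km + (real N - of_int km) * lam)"
proof -
  let ?x = "log lam \<delta>"
  have "0 < lam ^ N" using assms(4) by simp
  then have \<delta>: "0 < \<delta>" using assms(6) by linarith
  have "0 \<le> ?x" using le_power_iff_le_log[OF assms(4,5) \<delta>, of 0] assms(7) by simp
  moreover have "?x \<le> real N" using power_le_iff_log_le[OF assms(4,5) \<delta>] assms(6) by simp
  ultimately have "0 \<le> km" "km \<le> kp" "kp \<le> int N"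
    unfolding kp_def km_def by (auto simp: ceiling_le_iff floor_le_ceiling)
  then have kp: "of_int kp = real (nat kp)" "nat kp \<le> N"
    and km: "of_int km = real (nat km)" "nat km \<le> N"
    by auto
  have "lam ^ nat kp \<le> \<delta>"
    using le_of_int_ceiling[of ?x] kp(1)
    unfolding power_le_iff_log_le[OF assms(4,5) \<delta>] kp_def by linarith
  moreover have "\<delta> \<le> lam ^ nat km"
    using of_int_floor_le[of ?x] km(1)
    unfolding le_power_iff_le_log[OF assms(4,5) \<delta>] km_def by linarith
  ultimately show ?thesis
    using F_fid_between_bounds[OF assms(2,1,3-5) kp(2) _ km(2)]
    unfolding fidelity_bound_def kp(1) km(1) by blast
qed

end
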